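(* Let $c>0$, $q>0$, let $f,g:\mathbb{R}\to\mathbb{R}$ be continuous, $a\in\mathbb{R}$, and let $\varphi$ be a solution on $[0,R)$ of $$\varphi''+\frac{c-1}{r}\varphi'=f(\varphi)+g(\varphi)|\varphi'|^q,\qquad\varphi(0)=a,\qquad\varphi'(0)=0 .$$ Then: \begin{itemize} \item[(i)] if $f$ is positive, then $\varphi$ is strictly increasing; \item[(ii)] if $f$ is positive, $f,g$ are nondecreasing, and $c\ge1$, then $\varphi$ is convex and $\varphi'(r)\le\left(\frac{f(\varphi(r))}{g^-(\varphi(r))}\right)^{1/q}$ for all $r\in[0,R)$ (the right-hand side being $+\infty$ where $g^-(\varphi(r))=0$); \item[(iii)] if $f$ is positive, $f,g$ are nondecreasing, $g$ is nonnegative and $c\ge1$, then $\varphi''(r)\ge\frac{\varphi'(r)}{r}$ for all $r\in(0,R)$. \end{itemize}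
   Context: A solution on $[0,R)$, $0<R\le+\infty$, is a function $\varphi\in C^2((0,R))\cap C([0,R))$ satisfying the ODE on $(0,R)$, $\varphi(0)=a$, $\lim_{r\to0^+}\varphi'(r)=0=\varphi'(0)$, and such that $\lim_{r\to0^+}\varphi''(r)$ exists in $\mathbb{R}$. $g^-=\max(-g,0)$. *)

theory Defs
  imports "HOL-Analysis.Analysis"
begin

definition cl_int :: "ereal \<Rightarrow> real set" where
  "cl_int R = {r. 0 \<le> r \<and> ereal r < R}"

definition op_int :: "ereal \<Rightarrow> real set" where
  "op_int R = {r. 0 < r \<and> ereal r < R}"

definition gminus :: "(real \<Rightarrow> real) \<Rightarrow> real \<Rightarrow> real" where
  "gminus g x = max (- g x) 0"

definition is_solution ::
  "real \<Rightarrow> real \<Rightarrow> (real \<Rightarrow> real) \<Rightarrow> (real \<Rightarrow> real) \<Rightarrow> real \<Rightarrow> ereal \<Rightarrow> (real \<Rightarrow> real) \<Rightarrow> bool" where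
  "is_solution c q f g a R \<phi> \<longleftrightarrow>
     continuous_on (cl_int R) \<phi> \<and>
     (\<forall>r\<in>op_int R. \<phi> differentiable (at r)) \<and>
     (\<forall>r\<in>op_int R. deriv \<phi> differentiable (at r)) \<and>
     continuous_on (op_int R) (deriv (deriv \<phi>)) \<and>
     (\<forall>r\<in>op_int R. deriv (deriv \<phi>) r + (c - 1) / r * deriv \<phi> r
                    = f (\<phi> r) + g (\<phi> r) * \<bar>deriv \<phi> r\<bar> powr q) \<and>
     \<phi> 0 = a \<and>
     (\<phi> has_real_derivative 0) (at 0 within cl_int R) \<and>
     (deriv \<phi> \<longlongrightarrow> 0) (at_right 0) \<and>
     (\<exists>L. (deriv (deriv \<phi>) \<longlongrightarrow> L) (at_right 0))"

end

theory Submission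
  imports Defs
begin

text \<open>The equation has the divergence form \<open>(r\<^sup>c\<^sup>-\<^sup>1 \<phi>')' = r\<^sup>c\<^sup>-\<^sup>1 (f(\<phi>) + g(\<phi>)|\<phi>'|\<^sup>q)\<close>.
  At the centre, l'Hospital's rule applied to \<open>\<phi>'/r\<close> gives \<open>c \<phi>''(0\<^sup>+) = f(a)\<close>, so for positive \<open>f\<close>
  both \<open>\<phi>''\<close> and \<open>\<phi>'\<close> are positive near \<open>0\<close>; at a first zero of \<open>\<phi>'\<close> the equation would give
  \<open>\<phi>'' = f(\<phi>) > 0\<close>, which is impossible, hence \<open>\<phi>' > 0\<close> and \<open>\<phi>\<close> increases.

  For monotone \<open>f, g\<close> and \<open>c \<ge> 1\<close>, subtracting the equation at a zero \<open>r\<^sub>0\<close> of \<open>\<phi>''\<close> from the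
  equation at \<open>s > r\<^sub>0\<close> bounds \<open>\<phi>''(s)\<close> below by
  \<open>G(s) = g(\<phi>(r\<^sub>0)) (\<phi>'(s)\<^sup>q - \<phi>'(r\<^sub>0)\<^sup>q) - (c-1)(\<phi>'(s)/s - \<phi>'(r\<^sub>0)/r\<^sub>0)\<close>. For \<open>c > 1\<close>, \<open>G\<close> vanishes at
  \<open>r\<^sub>0\<close> with positive derivative; for \<open>c = 1\<close>, \<open>G \<ge> 0\<close> as long as \<open>\<phi>'\<close> decreases if \<open>g(\<phi>(r\<^sub>0)) \<le> 0\<close>,
  and otherwise \<open>g(\<phi>) > 0\<close> gives \<open>\<phi>'' = f(\<phi>) + g(\<phi>)\<phi>'\<^sup>q > 0\<close>. So \<open>\<phi>''\<close> cannot turn negative after a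
  zero, hence \<open>\<phi>'' \<ge> 0\<close> and \<open>\<phi>\<close> is convex.
  Then \<open>f(\<phi>) + g(\<phi>)\<phi>'\<^sup>q = \<phi>'' + (c-1)\<phi>'/r \<ge> 0\<close> is the bound on \<open>\<phi>'\<close>. If also \<open>g \<ge> 0\<close>, the right-hand
  side increases along the solution, and the divergence form yields \<open>c \<phi>'(r) \<le> r (\<phi>'' + (c-1)\<phi>'/r)\<close>,
  i.e. \<open>\<phi>'' \<ge> \<phi>'/r\<close>.\<close>

lemma cl_int_cases:
  assumes "0 < R"
  obtains "cl_int R = {0..}" "op_int R = {0<..}"
    | b where "0 < b" "cl_int R = {0..<b}" "op_int R = {0<..<b}"
proof (cases R)
  case (real b)
  with assms show ?thesis by (intro that(2)[of b]) (auto simp: cl_int_def op_int_def)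
next
  case PInf
  then show ?thesis by (intro that(1)) (auto simp: cl_int_def op_int_def)
qed (use assms in simp)

lemma open_op_int: "0 < R \<Longrightarrow> open (op_int R)"
  by (erule cl_int_cases) auto

lemma convex_cl_int: "0 < R \<Longrightarrow> convex (cl_int R)"
  by (erule cl_int_cases) auto

lemma interior_cl_int: "0 < R \<Longrightarrow> interior (cl_int R) = op_int R"
  by (erule cl_int_cases) auto

lemma zero_in_cl_int: "0 < R \<Longrightarrow> 0 \<in> cl_int R"
  by (erule cl_int_cases) auto

lemma at_within_op_int: "0 < R \<Longrightarrow> at 0 within op_int R = at_right 0"
proof (erule cl_int_cases)
  fix b :: real assume "0 < b" "op_int R = {0<..<b}"
  moreover have "{0<..<b} \<inter> {..<b} - {0} = {0<..} \<inter> {..<b} - {0::real}"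
    by auto
  ultimately show ?thesis
    using at_within_nhd[of 0 "{..<b}"] by auto
qed simp

lemma op_int_subset_cl_int: "op_int R \<subseteq> cl_int R"
  by (auto simp: op_int_def cl_int_def)

lemma cl_int_nonzero_in_op_int: "r \<in> cl_int R \<Longrightarrow> r \<noteq> 0 \<Longrightarrow> r \<in> op_int R"
  by (auto simp: op_int_def cl_int_def)

lemma op_int_downward: "r \<in> op_int R \<Longrightarrow> 0 < s \<Longrightarrow> s \<le> r \<Longrightarrow> s \<in> op_int R"
  by (auto simp: op_int_def) (meson ereal_less_eq(3) order.strict_trans1)

lemma Icc_subset_op_int: "r \<in> op_int R \<Longrightarrow> 0 < e \<Longrightarrow> {e..r} \<subseteq> op_int R"
  using op_int_downward by force

lemma Icc_subset_interior:
  fixes A :: "real set"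
  assumes "convex A" "x \<in> A" "y \<in> A"
  shows "{x..y} \<subseteq> A" "{x<..<y} \<subseteq> interior A"
proof -
  show Icc: "{x..y} \<subseteq> A"
    using assms by (intro connected_contains_Icc convex_connected)
  then show "{x<..<y} \<subseteq> interior A"
    by (intro interior_maximal) auto
qed

lemma DERIV_pos_imp_strict_mono_on:
  fixes f :: "real \<Rightarrow> real"
  assumes A: "convex A" and cont: "continuous_on A f"
    and deriv: "\<And>x. x \<in> interior A \<Longrightarrow> (f has_real_derivative f' x) (at x)"
    and pos: "\<And>x. x \<in> interior A \<Longrightarrow> 0 < f' x"
  shows "strict_mono_on A f"
proof (rule strict_mono_onI)
  fix x y assume xy: "x \<in> A" "y \<in> A" "x < y"
  show "f x < f y"
  proof (rule DERIV_pos_imp_increasing_open[OF \<open>x < y\<close>])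
    show "continuous_on {x..y} f"
      using Icc_subset_interior(1)[OF A xy(1,2)] cont continuous_on_subset by blast
    fix t assume "x < t" "t < y"
    then have "t \<in> interior A"
      using Icc_subset_interior(2)[OF A xy(1,2)] by auto
    then show "\<exists>l. DERIV f t :> l \<and> 0 < l"
      using deriv pos by blast
  qed
qed

lemma convex_on_real_interiorI:
  fixes f :: "real \<Rightarrow> real"
  assumes A: "convex A" and cont: "continuous_on A f"
    and deriv: "\<And>x. x \<in> interior A \<Longrightarrow> (f has_real_derivative f' x) (at x)"
    and mono: "\<And>x y. x \<in> interior A \<Longrightarrow> y \<in> interior A \<Longrightarrow> x \<le> y \<Longrightarrow> f' x \<le> f' y"
  shows "convex_on A f"
proof (rule convex_on_linorderI[OF _ A])
  fix t x y :: real
  assume t: "0 < t" "t < 1" and xy: "x \<in> A" "y \<in> A" "x < y"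
  define z where "z = (1 - t) * x + t * y"
  have zx: "z - x = t * (y - x)"
    unfolding z_def by (simp add: algebra_simps)
  have yz: "y - z = (1 - t) * (y - x)"
    unfolding z_def by (simp add: algebra_simps)
  have "x < z" "z < y"
    using zx yz t xy by (metis diff_gt_0_iff_gt mult_pos_pos)+
  have Icc: "{x..y} \<subseteq> A" and Ioo: "{x<..<y} \<subseteq> interior A"
    using Icc_subset_interior[OF A xy(1,2)] by auto
  have mvt: "\<exists>\<xi>. u < \<xi> \<and> \<xi> < v \<and> f v - f u = (v - u) * f' \<xi>" if "x \<le> u" "u < v" "v \<le> y" for u v
  proof -
    have "continuous_on {u..v} f"
      using Icc that by (intro continuous_on_subset[OF cont]) auto
    moreover have "f differentiable (at s)" if "u < s" "s < v" for s
    proof -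
      have "s \<in> interior A"
        using that \<open>x \<le> u\<close> \<open>v \<le> y\<close> by (intro subsetD[OF Ioo]) auto
      then show ?thesis
        using deriv real_differentiable_def by blast
    qed
    ultimately obtain l \<xi> where \<xi>: "u < \<xi>" "\<xi> < v" "DERIV f \<xi> :> l" "f v - f u = (v - u) * l"
      using MVT[OF \<open>u < v\<close>] by blast
    moreover have "l = f' \<xi>"
      using \<xi> Ioo that by (intro DERIV_unique[OF \<xi>(3) deriv]) auto
    ultimately show ?thesis
      by blast
  qed
  obtain \<xi> \<eta> where \<xi>: "x < \<xi>" "\<xi> < z" "f z - f x = t * (y - x) * f' \<xi>"
    and \<eta>: "z < \<eta>" "\<eta> < y" "f y - f z = (1 - t) * (y - x) * f' \<eta>"
    using mvt[of x z] mvt[of z y] \<open>x < z\<close> \<open>z < y\<close> unfolding zx yz by auto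
  have "f' \<xi> \<le> f' \<eta>"
    using \<xi> \<eta> \<open>x < z\<close> \<open>z < y\<close> by (intro mono subsetD[OF Ioo]) auto
  then have "(1 - t) * (f z - f x) \<le> t * (f y - f z)"
    unfolding \<xi>(3) \<eta>(3) using t xy by (simp add: mult_left_mono)
  then show "f ((1 - t) *\<^sub>R x + t *\<^sub>R y) \<le> (1 - t) * f x + t * f y"
    by (simp add: z_def algebra_simps)
qed

lemma first_root_after:
  fixes u :: "real \<Rightarrow> real"
  assumes "a < b" and cont: "continuous_on {a..b} u" and "0 < u a" "u b \<le> 0"
  obtains z where "a < z" "z \<le> b" "u z = 0" "\<And>s. a \<le> s \<Longrightarrow> s < z \<Longrightarrow> 0 < u s"
proof -
  define Z where "Z = {a..b} \<inter> u -` {..0}"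
  have "closed Z"
    unfolding Z_def using cont by (intro continuous_closed_preimage) auto
  moreover have "b \<in> Z" "bdd_below Z"
    using assms by (auto simp: Z_def)
  ultimately have z: "Inf Z \<in> Z"
    using closed_contains_Inf by blast
  have below: "0 < u s" if "a \<le> s" "s < Inf Z" for s
    using cInf_lower[OF _ \<open>bdd_below Z\<close>, of s] that z by (force simp: Z_def)
  have "a < Inf Z"
    using z \<open>0 < u a\<close> by (auto simp: Z_def order.order_iff_strict)
  obtain s where s: "a \<le> s" "s \<le> Inf Z" "u s = 0"
    using IVT2'[of u "Inf Z" 0 a] z \<open>0 < u a\<close> continuous_on_subset[OF cont]
    by (force simp: Z_def)
  then have "s = Inf Z"
    using below by fastforce
  then show ?thesis
    using that \<open>a < Inf Z\<close> z s below by (auto simp: Z_def)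
qed

lemma last_root_before:
  fixes u :: "real \<Rightarrow> real"
  assumes "a < b" and cont: "continuous_on {a..b} u" and "0 \<le> u a" "u b < 0"
  obtains z where "a \<le> z" "z < b" "u z = 0" "\<And>s. z < s \<Longrightarrow> s \<le> b \<Longrightarrow> u s < 0"
proof -
  define v where "v s = - u (a + b - s)" for s
  have "continuous_on {a..b} v"
    unfolding v_def using cont
    by (intro continuous_intros continuous_on_compose2[OF cont]) auto
  then obtain z where "a < z" "z \<le> b" "v z = 0" and pos: "\<And>s. a \<le> s \<Longrightarrow> s < z \<Longrightarrow> 0 < v s"
    using first_root_after[of a b v] assms by (auto simp: v_def)
  moreover have "u s < 0" if "a + b - z < s" "s \<le> b" for s
    using pos[of "a + b - s"] that by (simp add: v_def)
  ultimately show ?thesis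
    by (intro that[of "a + b - z"]) (auto simp: v_def)
qed

lemma eventually_at_right_witness:
  fixes x r :: real
  assumes "eventually P (at_right x)" "x < r"
  obtains e where "x < e" "e < r" "P e"
proof -
  have "\<forall>\<^sub>F s in at_right x. s < r"
    using \<open>x < r\<close> eventually_at_right_field by blast
  then have "\<forall>\<^sub>F s in at_right x. P s \<and> x < s \<and> s < r"
    by (intro eventually_conj assms(1) eventually_at_right_less)
  then show ?thesis
    using that eventually_happens'[OF trivial_limit_at_right_real] by blast
qed

locale radial_solution =
  fixes c q a :: real and f g \<phi> :: "real \<Rightarrow> real" and R :: ereal
  assumes c_pos: "0 < c" and q_pos: "0 < q"
    and cont_f: "continuous_on UNIV f" and cont_g: "continuous_on UNIV g"
    and R_pos: "0 < R"
    and solution: "is_solution c q f g a R \<phi>"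
begin

abbreviation \<phi>' :: "real \<Rightarrow> real" where "\<phi>' \<equiv> deriv \<phi>"
abbreviation \<phi>'' :: "real \<Rightarrow> real" where "\<phi>'' \<equiv> deriv (deriv \<phi>)"

definition rhs :: "real \<Rightarrow> real" where
  "rhs r = f (\<phi> r) + g (\<phi> r) * \<bar>\<phi>' r\<bar> powr q"

lemma \<phi>_has_deriv: "r \<in> op_int R \<Longrightarrow> (\<phi> has_real_derivative \<phi>' r) (at r)"
  using solution unfolding is_solution_def by (simp add: DERIV_deriv_iff_real_differentiable)

lemma \<phi>'_has_deriv: "r \<in> op_int R \<Longrightarrow> (\<phi>' has_real_derivative \<phi>'' r) (at r)"
  using solution unfolding is_solution_def by (simp add: DERIV_deriv_iff_real_differentiable)

lemma radial_ode: "r \<in> op_int R \<Longrightarrow> \<phi>'' r + (c - 1) / r * \<phi>' r = rhs r"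
  using solution unfolding is_solution_def rhs_def by blast

lemma continuous_on_\<phi>': "continuous_on (op_int R) \<phi>'"
  using \<phi>'_has_deriv by (intro continuous_at_imp_continuous_on ballI DERIV_isCont)

lemma continuous_on_\<phi>'': "continuous_on (op_int R) \<phi>''"
  using solution unfolding is_solution_def by blast

lemma continuous_on_\<phi>: "continuous_on (cl_int R) \<phi>"
  using solution unfolding is_solution_def by blast

lemma \<phi>_0: "\<phi> 0 = a"
  using solution unfolding is_solution_def by blast

lemma \<phi>'_tendsto_0: "(\<phi>' \<longlongrightarrow> 0) (at_right 0)"
  using solution unfolding is_solution_def by blast

lemma \<phi>_tendsto_a: "(\<phi> \<longlongrightarrow> a) (at_right 0)"
proof -
  have "(\<phi> \<longlongrightarrow> a) (at 0 within cl_int R)"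
    using continuous_on_\<phi> zero_in_cl_int[OF R_pos] \<phi>_0
    by (metis continuous_on_def)
  then show ?thesis
    using tendsto_within_subset[OF _ op_int_subset_cl_int] at_within_op_int[OF R_pos] by metis
qed

lemma eventually_in_op_int: "\<forall>\<^sub>F r in at_right 0. r \<in> op_int R"
  unfolding at_within_op_int[OF R_pos, symmetric] by (simp add: eventually_at_filter)

lemma eventually_at_right_in_op_int:
  "r \<in> op_int R \<Longrightarrow> \<forall>\<^sub>F s in at_right r. s \<in> op_int R"
  using eventually_nhds_in_open[OF open_op_int[OF R_pos], of r]
  unfolding eventually_at_filter by (auto elim: eventually_mono)

lemma radial_divergence_form:
  assumes r: "r \<in> op_int R"
  shows "((\<lambda>s. s powr (c - 1) * \<phi>' s) has_real_derivative r powr (c - 1) * rhs r) (at r)"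
proof -
  have "0 < r"
    using r by (simp add: op_int_def)
  have "((\<lambda>s. s powr (c - 1) * \<phi>' s) has_real_derivative
      (c - 1) * r powr (c - 1 - 1) * \<phi>' r + r powr (c - 1) * \<phi>'' r) (at r)"
    using \<open>0 < r\<close> \<phi>'_has_deriv[OF r]
    by (auto intro!: derivative_eq_intros)
  moreover have "(c - 1) * r powr (c - 1 - 1) * \<phi>' r + r powr (c - 1) * \<phi>'' r = r powr (c - 1) * rhs r"
    unfolding radial_ode[OF r, symmetric] using \<open>0 < r\<close>
    by (simp add: powr_diff power2_eq_square field_simps)
  ultimately show ?thesis
    by simp
qed

lemma \<phi>''_limit_at_0:
  obtains L where "(\<phi>'' \<longlongrightarrow> L) (at_right 0)" "c * L = f a"
proof -
  obtain L where L: "(\<phi>'' \<longlongrightarrow> L) (at_right 0)"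
    using solution unfolding is_solution_def by blast
  have "((\<lambda>r. \<phi>' r / r) \<longlongrightarrow> L) (at_right 0)"
  proof (rule lhopital_right_0[where f'=\<phi>'' and g'="\<lambda>_. 1"])
    show "\<forall>\<^sub>F r in at_right 0. (\<phi>' has_real_derivative \<phi>'' r) (at r)"
      using eventually_in_op_int by eventually_elim (rule \<phi>'_has_deriv)
  qed (use \<phi>'_tendsto_0 L in \<open>auto intro: tendsto_ident_at eventually_at_right_less
        simp: eventually_mono[OF eventually_at_right_less] DERIV_ident\<close>)
  then have "((\<lambda>r. \<phi>'' r + (c - 1) * (\<phi>' r / r)) \<longlongrightarrow> L + (c - 1) * L) (at_right 0)"
    using L by (intro tendsto_intros)
  moreover have "((\<lambda>r. \<phi>'' r + (c - 1) * (\<phi>' r / r)) \<longlongrightarrow> f a + g a * 0) (at_right 0)"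
  proof (rule Lim_transform_eventually)
    show "(rhs \<longlongrightarrow> f a + g a * 0) (at_right 0)"
      unfolding rhs_def using cont_f cont_g q_pos \<phi>_tendsto_a \<phi>'_tendsto_0
      by (intro tendsto_intros tendsto_zero_powrI[where b=q] tendsto_rabs_zero
          isCont_tendsto_compose[of a f] isCont_tendsto_compose[of a g])
        (auto simp: continuous_on_eq_continuous_at)
    show "\<forall>\<^sub>F r in at_right 0. rhs r = \<phi>'' r + (c - 1) * (\<phi>' r / r)"
      using eventually_in_op_int by eventually_elim (simp flip: radial_ode)
  qed
  ultimately have "L + (c - 1) * L = f a + g a * 0"
    by (rule tendsto_unique[OF trivial_limit_at_right_real])
  then show ?thesis
    using that L by (simp add: algebra_simps)
qed

end

locale positive_radial_solution = radial_solution +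
  assumes f_pos: "\<And>x. 0 < f x"
begin

lemma eventually_\<phi>''_pos: "\<forall>\<^sub>F r in at_right 0. 0 < \<phi>'' r"
proof -
  obtain L where "(\<phi>'' \<longlongrightarrow> L) (at_right 0)" "c * L = f a"
    by (rule \<phi>''_limit_at_0)
  moreover have "0 < L"
    using \<open>c * L = f a\<close> f_pos[of a] c_pos by (metis zero_less_mult_pos)
  ultimately show ?thesis
    using order_tendstoD(1) by blast
qed

lemma eventually_\<phi>'_pos: "\<forall>\<^sub>F r in at_right 0. 0 < \<phi>' r"
proof -
  obtain b where "0 < b" and b: "\<And>s. 0 < s \<Longrightarrow> s < b \<Longrightarrow> s \<in> op_int R \<and> 0 < \<phi>'' s"
    using eventually_conj[OF eventually_in_op_int eventually_\<phi>''_pos]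
    unfolding eventually_at_right_field by auto
  have \<phi>'_less: "\<phi>' x < \<phi>' y" if "0 < x" "x < y" "y < b" for x y
  proof (rule DERIV_pos_imp_increasing[OF \<open>x < y\<close>])
    fix t assume "x \<le> t" "t \<le> y"
    then have "t \<in> op_int R \<and> 0 < \<phi>'' t"
      using b that by simp
    then show "\<exists>l. (\<phi>' has_real_derivative l) (at t) \<and> 0 < l"
      using \<phi>'_has_deriv by blast
  qed
  have "0 < \<phi>' s" if "0 < s" "s < b" for s
  proof -
    have "0 \<le> \<phi>' (s / 2)"
    proof (rule tendsto_upperbound[OF \<phi>'_tendsto_0])
      show "\<forall>\<^sub>F r in at_right 0. \<phi>' r \<le> \<phi>' (s / 2)"
        unfolding eventually_at_right_field using that \<phi>'_less
        by (intro exI[of _ "s / 2"]) (auto intro: less_imp_le)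
    qed simp
    also have "\<dots> < \<phi>' s"
      using \<phi>'_less that by simp
    finally show ?thesis .
  qed
  then show ?thesis
    unfolding eventually_at_right_field using \<open>0 < b\<close> by blast
qed

lemma \<phi>'_pos:
  assumes r: "r \<in> op_int R"
  shows "0 < \<phi>' r"
proof (rule ccontr)
  assume "\<not> 0 < \<phi>' r"
  obtain e where e: "0 < e" "e < r" "0 < \<phi>' e"
    using eventually_at_right_witness[OF eventually_\<phi>'_pos] r by (auto simp: op_int_def)
  have "continuous_on {e..r} \<phi>'"
    using continuous_on_subset[OF continuous_on_\<phi>' Icc_subset_op_int[OF r \<open>0 < e\<close>]] .
  then obtain r0 where "e < r0" "r0 \<le> r" and r0: "\<phi>' r0 = 0"
    and before: "\<And>s. e \<le> s \<Longrightarrow> s < r0 \<Longrightarrow> 0 < \<phi>' s"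
    using first_root_after[of e r \<phi>'] e \<open>\<not> 0 < \<phi>' r\<close> by auto
  have r0_op: "r0 \<in> op_int R"
    using op_int_downward[OF r, of r0] \<open>e < r0\<close> \<open>r0 \<le> r\<close> e by simp
  have "\<phi>'' r0 = f (\<phi> r0)"
    using radial_ode[OF r0_op] r0 by (simp add: rhs_def)
  then obtain h where "0 < h" and h: "\<And>t. 0 < t \<Longrightarrow> t < h \<Longrightarrow> \<phi>' (r0 - t) < \<phi>' r0"
    using DERIV_pos_inc_left[OF \<phi>'_has_deriv[OF r0_op]] f_pos by metis
  define t where "t = min (h / 2) (r0 - e)"
  have "\<phi>' (r0 - t) < 0"
    using h[of t] \<open>0 < h\<close> \<open>e < r0\<close> r0 by (simp add: t_def)
  moreover have "0 < \<phi>' (r0 - t)"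
    using before[of "r0 - t"] \<open>0 < h\<close> \<open>e < r0\<close> by (simp add: t_def)
  ultimately show False
    by simp
qed

lemma \<phi>_strict_mono: "strict_mono_on (cl_int R) \<phi>"
  using convex_cl_int[OF R_pos] continuous_on_\<phi> \<phi>_has_deriv \<phi>'_pos
  by (rule DERIV_pos_imp_strict_mono_on) (simp_all add: interior_cl_int[OF R_pos])

lemma \<phi>_mono: "r \<in> cl_int R \<Longrightarrow> s \<in> cl_int R \<Longrightarrow> r \<le> s \<Longrightarrow> \<phi> r \<le> \<phi> s"
  using \<phi>_strict_mono by (metis order.order_iff_strict strict_mono_onD)

lemma rhs_eq: "r \<in> op_int R \<Longrightarrow> rhs r = f (\<phi> r) + g (\<phi> r) * \<phi>' r powr q"
  using \<phi>'_pos[of r] by (simp add: rhs_def)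

lemma \<phi>''_eq: "r \<in> op_int R \<Longrightarrow> \<phi>'' r = rhs r - (c - 1) / r * \<phi>' r"
  using radial_ode by (simp add: algebra_simps)

end

locale monotone_radial_solution = positive_radial_solution +
  assumes mono_f: "mono f" and mono_g: "mono g" and c_ge_1: "1 \<le> c"
begin

lemma rhs_increment_ge:
  assumes "r \<in> op_int R" "s \<in> op_int R" "r \<le> s"
  shows "g (\<phi> r) * (\<phi>' s powr q - \<phi>' r powr q) \<le> rhs s - rhs r"
proof -
  have "\<phi> r \<le> \<phi> s"
    using assms op_int_subset_cl_int by (intro \<phi>_mono) auto
  then have "f (\<phi> r) \<le> f (\<phi> s)" "g (\<phi> r) \<le> g (\<phi> s)"
    using mono_f mono_g by (auto dest: monoD)
  moreover have "g (\<phi> r) * \<phi>' s powr q \<le> g (\<phi> s) * \<phi>' s powr q"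
    using \<open>g (\<phi> r) \<le> g (\<phi> s)\<close> by (simp add: mult_right_mono)
  ultimately show ?thesis
    using assms by (simp add: rhs_eq algebra_simps)
qed

lemma \<phi>''_lower_bound:
  assumes r: "r \<in> op_int R" and s: "s \<in> op_int R" "r \<le> s" and "\<phi>'' r = 0"
  shows "g (\<phi> r) * (\<phi>' s powr q - \<phi>' r powr q) - (c - 1) * (\<phi>' s / s - \<phi>' r / r) \<le> \<phi>'' s"
proof -
  have "\<phi>'' s = (rhs s - rhs r) - (c - 1) * (\<phi>' s / s - \<phi>' r / r)"
    using \<phi>''_eq[OF s(1)] \<phi>''_eq[OF r] \<open>\<phi>'' r = 0\<close> by (simp add: algebra_simps)
  then show ?thesis
    using rhs_increment_ge[OF r s] by simp
qed

lemma eventually_\<phi>''_pos_after_zero: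
  assumes "1 < c" and r: "r \<in> op_int R" and "\<phi>'' r = 0"
  shows "\<forall>\<^sub>F s in at_right r. 0 < \<phi>'' s"
proof -
  define G where
    "G s = g (\<phi> r) * (\<phi>' s powr q - \<phi>' r powr q) - (c - 1) * (\<phi>' s / s - \<phi>' r / r)" for s
  have "0 < r" "0 < \<phi>' r"
    using r \<phi>'_pos by (auto simp: op_int_def)
  have "(G has_real_derivative
      g (\<phi> r) * (q * \<phi>' r powr (q - 1) * \<phi>'' r - 0)
      - (c - 1) * ((\<phi>'' r * r - \<phi>' r * 1) / (r * r) - 0)) (at r)"
    unfolding G_def using \<open>0 < r\<close> \<open>0 < \<phi>' r\<close> \<phi>'_has_deriv[OF r]
    by (intro DERIV_diff DERIV_cmult DERIV_const DERIV_fun_powr[where r=q, simplified]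
        DERIV_divide DERIV_ident) auto
  then have "(G has_real_derivative (c - 1) * (\<phi>' r / (r * r))) (at r)"
    using \<open>\<phi>'' r = 0\<close> by simp
  moreover have "0 < (c - 1) * (\<phi>' r / (r * r))"
    using \<open>1 < c\<close> \<open>0 < r\<close> \<open>0 < \<phi>' r\<close> by simp
  ultimately obtain d where "0 < d" and d: "\<And>h. 0 < h \<Longrightarrow> h < d \<Longrightarrow> G r < G (r + h)"
    using DERIV_pos_inc_right by blast
  have "\<forall>\<^sub>F s in at_right r. 0 < G s"
    unfolding eventually_at_right_field using \<open>0 < d\<close> d[of "_ - r"]
    by (intro exI[of _ "r + d"]) (auto simp: G_def)
  then show ?thesis
    using eventually_at_right_in_op_int[OF r] eventually_at_right_less
  proof eventually_elim
    case (elim s)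
    then show ?case
      using \<phi>''_lower_bound[OF r, of s] \<open>\<phi>'' r = 0\<close> by (simp add: G_def)
  qed
qed


lemma \<phi>''_nonneg_after_zero_if_c_eq_1:
  assumes "c = 1" and r0: "r0 \<in> op_int R" and r: "r \<in> op_int R" "r0 \<le> r" and "\<phi>'' r0 = 0"
    and nonpos: "\<And>s. r0 \<le> s \<Longrightarrow> s \<le> r \<Longrightarrow> \<phi>'' s \<le> 0"
  shows "0 \<le> \<phi>'' r"
proof (cases "g (\<phi> r0) \<le> 0")
  case True
  have "\<phi>' r \<le> \<phi>' r0"
  proof (rule DERIV_nonpos_imp_nonincreasing[OF \<open>r0 \<le> r\<close>])
    fix s assume "r0 \<le> s" "s \<le> r"
    moreover have "s \<in> op_int R"
      using Icc_subset_op_int[OF r(1), of r0] r0 \<open>r0 \<le> s\<close> \<open>s \<le> r\<close> by (auto simp: op_int_def)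
    ultimately show "\<exists>l. (\<phi>' has_real_derivative l) (at s) \<and> l \<le> 0"
      using \<phi>'_has_deriv nonpos by blast
  qed
  then have "\<phi>' r powr q \<le> \<phi>' r0 powr q"
    using \<phi>'_pos[OF r(1)] q_pos by (intro powr_mono2) auto
  then have "0 \<le> g (\<phi> r0) * (\<phi>' r powr q - \<phi>' r0 powr q)"
    using True by (simp add: mult_nonpos_nonpos)
  then show ?thesis
    using \<phi>''_lower_bound[OF r0 r \<open>\<phi>'' r0 = 0\<close>] \<open>c = 1\<close> by simp
next
  case False
  have "\<phi> r0 \<le> \<phi> r"
    using r0 r op_int_subset_cl_int by (intro \<phi>_mono) auto
  then have "0 < g (\<phi> r)"
    using monoD[OF mono_g] False by (meson le_less_trans not_le)
  then have "0 < rhs r"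
    using f_pos[of "\<phi> r"] by (simp add: rhs_eq[OF r(1)] add_pos_nonneg)
  then show ?thesis
    using \<phi>''_eq[OF r(1)] \<open>c = 1\<close> by simp
qed

lemma \<phi>''_nonneg:
  assumes r: "r \<in> op_int R"
  shows "0 \<le> \<phi>'' r"
proof (rule ccontr)
  assume "\<not> 0 \<le> \<phi>'' r"
  obtain e where "0 < e" "e < r" "0 < \<phi>'' e"
    using eventually_at_right_witness[OF eventually_\<phi>''_pos] r by (auto simp: op_int_def)
  have Icc: "{e..r} \<subseteq> op_int R"
    using Icc_subset_op_int[OF r \<open>0 < e\<close>] .
  then obtain r0 where "e \<le> r0" "r0 < r" and r0: "\<phi>'' r0 = 0"
    and after: "\<And>s. r0 < s \<Longrightarrow> s \<le> r \<Longrightarrow> \<phi>'' s < 0"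
    using last_root_before[of e r \<phi>''] continuous_on_subset[OF continuous_on_\<phi>'' Icc]
      \<open>e < r\<close> \<open>0 < \<phi>'' e\<close> \<open>\<not> 0 \<le> \<phi>'' r\<close> by auto
  have r0_op: "r0 \<in> op_int R"
    using Icc \<open>e \<le> r0\<close> \<open>r0 < r\<close> by auto
  show False
  proof (cases "c = 1")
    case True
    have "\<phi>'' s \<le> 0" if "r0 \<le> s" "s \<le> r" for s
      using r0 after[of s] that by (cases "s = r0") auto
    then show False
      using \<phi>''_nonneg_after_zero_if_c_eq_1[OF True r0_op r _ r0] \<open>r0 < r\<close> \<open>\<not> 0 \<le> \<phi>'' r\<close>
      by simp
  next
    case False
    then obtain s where "r0 < s" "s < r" "0 < \<phi>'' s"
      using eventually_at_right_witness[OF eventually_\<phi>''_pos_after_zero[OF _ r0_op r0] \<open>r0 < r\<close>]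
        c_ge_1 by auto
    then show False
      using after[of s] by simp
  qed
qed

lemma \<phi>'_mono:
  assumes "r \<in> op_int R" "s \<in> op_int R" "r \<le> s"
  shows "\<phi>' r \<le> \<phi>' s"
proof (rule DERIV_nonneg_imp_nondecreasing[OF \<open>r \<le> s\<close>])
  fix t assume "r \<le> t" "t \<le> s"
  then have "t \<in> op_int R"
    using assms Icc_subset_op_int[of s R r] by (auto simp: op_int_def)
  then show "\<exists>l. (\<phi>' has_real_derivative l) (at t) \<and> 0 \<le> l"
    using \<phi>'_has_deriv \<phi>''_nonneg by blast
qed

lemma \<phi>_convex: "convex_on (cl_int R) \<phi>"
  using convex_cl_int[OF R_pos] continuous_on_\<phi> \<phi>_has_deriv \<phi>'_mono
  by (rule convex_on_real_interiorI) (simp_all add: interior_cl_int[OF R_pos])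

lemma \<phi>'_le_bound:
  assumes r: "r \<in> op_int R" and "gminus g (\<phi> r) \<noteq> 0"
  shows "\<phi>' r \<le> (f (\<phi> r) / gminus g (\<phi> r)) powr (1 / q)"
proof -
  have g: "gminus g (\<phi> r) = - g (\<phi> r)" "g (\<phi> r) < 0"
    using \<open>gminus g (\<phi> r) \<noteq> 0\<close> by (auto simp: gminus_def max_def split: if_splits)
  have "0 \<le> (c - 1) / r * \<phi>' r"
    using c_ge_1 r \<phi>'_pos[OF r] by (simp add: op_int_def)
  then have "0 \<le> rhs r"
    using radial_ode[OF r] \<phi>''_nonneg[OF r] by linarith
  then have "\<phi>' r powr q * gminus g (\<phi> r) \<le> f (\<phi> r)"
    using g by (simp add: rhs_eq[OF r] algebra_simps)
  moreover have "0 < gminus g (\<phi> r)"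
    using g by simp
  ultimately have "\<phi>' r powr q \<le> f (\<phi> r) / gminus g (\<phi> r)"
    by (simp only: pos_le_divide_eq)
  then have "(\<phi>' r powr q) powr (1 / q) \<le> (f (\<phi> r) / gminus g (\<phi> r)) powr (1 / q)"
    using q_pos by (intro powr_mono2) auto
  then show ?thesis
    using q_pos \<phi>'_pos[OF r] by (simp add: powr_powr)
qed

lemma rhs_mono:
  assumes g_nonneg: "\<And>x. 0 \<le> g x" and r: "r \<in> op_int R" and "0 < s" "s \<le> r"
  shows "rhs s \<le> rhs r"
proof -
  have s: "s \<in> op_int R"
    using op_int_downward[OF r] \<open>0 < s\<close> \<open>s \<le> r\<close> .
  have "\<phi> s \<le> \<phi> r"
    using s r \<open>s \<le> r\<close> op_int_subset_cl_int by (intro \<phi>_mono) auto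
  then have f: "f (\<phi> s) \<le> f (\<phi> r)" and g: "g (\<phi> s) \<le> g (\<phi> r)"
    using monoD[OF mono_f] monoD[OF mono_g] by auto
  have "\<phi>' s powr q \<le> \<phi>' r powr q"
    using \<phi>'_mono[OF s r \<open>s \<le> r\<close>] \<phi>'_pos[OF s] q_pos by (intro powr_mono2) auto
  then have "g (\<phi> s) * \<phi>' s powr q \<le> g (\<phi> r) * \<phi>' r powr q"
    using g g_nonneg by (intro mult_mono) auto
  then show ?thesis
    using f by (simp add: rhs_eq[OF s] rhs_eq[OF r])
qed

text \<open>The integrated divergence form \<open>r\<^sup>c\<^sup>-\<^sup>1 \<phi>' r = \<integral>\<^sub>0\<^sup>r s\<^sup>c\<^sup>-\<^sup>1 rhs s ds \<le> rhs r \<cdot> r\<^sup>c / c\<close>, stated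
  without integrals.\<close>
lemma weighted_\<phi>'_comparison:
  assumes g_nonneg: "\<And>x. 0 \<le> g x" and r: "r \<in> op_int R" and "0 < s" "s \<le> r"
  shows "r powr (c - 1) * \<phi>' r - rhs r / c * r powr c \<le> s powr (c - 1) * \<phi>' s - rhs r / c * s powr c"
    (is "?Q r \<le> ?Q s")
proof (rule DERIV_nonpos_imp_nonincreasing[where f="?Q", OF \<open>s \<le> r\<close>])
  fix t assume "s \<le> t" "t \<le> r"
  then have t: "t \<in> op_int R" "0 < t"
    using op_int_downward[OF r] \<open>0 < s\<close> by auto
  have "(?Q has_real_derivative t powr (c - 1) * rhs t - rhs r / c * (c * t powr (c - 1))) (at t)"
    by (intro DERIV_diff DERIV_cmult radial_divergence_form[OF t(1)] has_real_derivative_powr t(2))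
  moreover have "t powr (c - 1) * rhs t - rhs r / c * (c * t powr (c - 1))
      = t powr (c - 1) * (rhs t - rhs r)"
    using c_pos by (simp add: algebra_simps)
  moreover have "t powr (c - 1) * (rhs t - rhs r) \<le> 0"
    using rhs_mono[OF g_nonneg r t(2) \<open>t \<le> r\<close>] by (simp add: mult_nonneg_nonpos)
  ultimately show "\<exists>l. (?Q has_real_derivative l) (at t) \<and> l \<le> 0"
    by auto
qed

lemma \<phi>'_le_rhs:
  assumes g_nonneg: "\<And>x. 0 \<le> g x" and r: "r \<in> op_int R"
  shows "c * \<phi>' r \<le> r * rhs r"
proof -
  have "0 < r"
    using r by (simp add: op_int_def)
  have "r powr (c - 1) * \<phi>' r - rhs r / c * r powr c \<le> 0"
  proof (rule tendsto_lowerbound[OF \<phi>'_tendsto_0])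
    show "\<forall>\<^sub>F s in at_right 0. r powr (c - 1) * \<phi>' r - rhs r / c * r powr c \<le> \<phi>' s"
      unfolding eventually_at_right_field
    proof (intro exI[of _ "min r 1"] conjI allI impI)
      fix s :: real assume s: "0 < s" "s < min r 1"
      then have "s \<in> op_int R"
        using op_int_downward[OF r] by simp
      have "s powr (c - 1) \<le> 1"
        using s c_ge_1 by (intro powr_le1) auto
      then have "s powr (c - 1) * \<phi>' s \<le> \<phi>' s"
        using \<phi>'_pos[OF \<open>s \<in> op_int R\<close>] by (simp add: mult_left_le_one_le)
      moreover have "0 \<le> rhs r / c * s powr c"
        using rhs_eq[OF r] f_pos[of "\<phi> r"] g_nonneg[of "\<phi> r"] c_pos by simp
      ultimately show "r powr (c - 1) * \<phi>' r - rhs r / c * r powr c \<le> \<phi>' s"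
        using weighted_\<phi>'_comparison[OF g_nonneg r, of s] s by simp
    qed (use \<open>0 < r\<close> in simp)
  qed simp
  moreover have "r powr c = r powr (c - 1) * r"
    using \<open>0 < r\<close> by (simp add: powr_diff)
  ultimately have "r powr (c - 1) * \<phi>' r \<le> r powr (c - 1) * (rhs r / c * r)"
    by (simp add: algebra_simps)
  then show ?thesis
    using \<open>0 < r\<close> c_pos by (simp add: field_simps)
qed

lemma \<phi>''_ge_\<phi>'_div:
  assumes "\<And>x. 0 \<le> g x" and r: "r \<in> op_int R"
  shows "\<phi>' r / r \<le> \<phi>'' r"
proof -
  have "0 < r"
    using r by (simp add: op_int_def)
  then have "c * (\<phi>' r / r) \<le> rhs r"
    using \<phi>'_le_rhs[OF assms] by (simp add: field_simps)
  moreover have "\<phi>'' r = rhs r - (c * (\<phi>' r / r) - \<phi>' r / r)"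
    using \<phi>''_eq[OF r] \<open>0 < r\<close> by (simp add: field_simps)
  ultimately show ?thesis
    by linarith
qed

end

theorem lemma2p1:
  fixes c q a :: real and f g \<phi> :: "real \<Rightarrow> real" and R :: ereal
  assumes "c > 0" and "q > 0"
    and "continuous_on UNIV f" and "continuous_on UNIV g"
    and "0 < R"
    and "is_solution c q f g a R \<phi>"
  shows "((\<forall>x. f x > 0) \<longrightarrow> strict_mono_on (cl_int R) \<phi>)
    \<and> ((\<forall>x. f x > 0) \<and> mono f \<and> mono g \<and> c \<ge> 1 \<longrightarrow>
         convex_on (cl_int R) \<phi> \<and>
         (\<forall>r\<in>cl_int R. gminus g (\<phi> r) = 0 \<or>
             (if r = 0 then 0 else deriv \<phi> r)
               \<le> (f (\<phi> r) / gminus g (\<phi> r)) powr (1 / q)))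
    \<and> ((\<forall>x. f x > 0) \<and> mono f \<and> mono g \<and> (\<forall>x. g x \<ge> 0) \<and> c \<ge> 1 \<longrightarrow>
         (\<forall>r\<in>op_int R. deriv (deriv \<phi>) r \<ge> deriv \<phi> r / r))"
proof (intro conjI impI)
  assume "\<forall>x. f x > 0"
  then interpret positive_radial_solution c q a f g \<phi> R
    using assms by unfold_locales auto
  show "strict_mono_on (cl_int R) \<phi>"
    by (rule \<phi>_strict_mono)
next
  assume "(\<forall>x. f x > 0) \<and> mono f \<and> mono g \<and> c \<ge> 1"
  then interpret monotone_radial_solution c q a f g \<phi> R
    using assms by unfold_locales auto
  show "convex_on (cl_int R) \<phi>"
    by (rule \<phi>_convex)
  show "\<forall>r\<in>cl_int R. gminus g (\<phi> r) = 0 \<or>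
      (if r = 0 then 0 else \<phi>' r) \<le> (f (\<phi> r) / gminus g (\<phi> r)) powr (1 / q)"
    using \<phi>'_le_bound cl_int_nonzero_in_op_int by auto
next
  assume "(\<forall>x. f x > 0) \<and> mono f \<and> mono g \<and> (\<forall>x. g x \<ge> 0) \<and> c \<ge> 1"
  then interpret monotone_radial_solution c q a f g \<phi> R
    using assms by unfold_locales auto
  show "\<forall>r\<in>op_int R. \<phi>' r / r \<le> \<phi>'' r"
    using \<phi>''_ge_\<phi>'_div \<open>(\<forall>x. f x > 0) \<and> _\<close> by blast
qed

end
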